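(* For every natural number $n>1$, the following sentences are provable in the theory ${\sf TQ}$: $\forall u\exists y\,[\Re_n(y\cdot u)]$; $\forall x,u\exists y\,[x<y\wedge\Re_n(y\cdot u)]$; $\forall z,u\exists y\,[y<z\wedge\Re_n(y\cdot u)]$; $\forall x,z,u\exists y\,[x<z\rightarrow (x<y\wedge y<z\wedge\Re_n(y\cdot u))]$.
   Context: Language $\{<,\times,\square^{-1},\mathbf{1}\}$; $y^n$ abbreviates $y\cdots y$ ($n$ times); for $n\geqslant 1$, $\Re_n(y)$ abbreviates the formula $\exists x\,(y=x^n)$. ${\sf TQ}$ is the theory axiomatized by: ($\texttt{O}_1$) $\forall x,y(x<y\rightarrow\neg(y<x))$; ($\texttt{O}_2$) $\forall x,y,z(x<y\wedge y<z\rightarrow x<z)$; ($\texttt{O}_3$) $\forall x,y(x<y\vee x=y\vee y<x)$; ($\texttt{M}_1$) $\forall x,y,z(x\cdot(y\cdot z)=(x\cdot y)\cdot z)$; ($\texttt{M}_2$) $\forall x(x\cdot\mathbf{1}=x)$; ($\texttt{M}_3$) $\forall x(x\cdot x^{-1}=\mathbf{1})$; ($\texttt{M}_4$) $\forall x,y(x\cdot y=y\cdot x)$; ($\texttt{M}_5$) $\forall x,y,z(x<y\rightarrow x\cdot z<y\cdot z)$; ($\texttt{M}_6$) $\exists y(y\neq\mathbf{1})$; ($\texttt{M}_{10}$) for each $n\geqslant1$: $\forall x,z\exists y(x<z\rightarrow x<y^n\wedge y^n<z)$; ($\texttt{M}_{11}$) for each $n\geqslant 1$, each $q\geqslant1$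 and all natural numbers $m_0,\dots,m_{q-1}>1$: $\forall x_0,\dots,x_{q-1}\exists y\forall z\bigwedge_{j<q,\ m_j\nmid n}(y^n\cdot x_j\neq z^{m_j})$, the conjunction ranging over those $j<q$ for which $m_j$ does not divide $n$. *)

theory Defs
  imports Main
begin

text \<open>A structure for the language {<, *, inverse, 1} is given by four
  parameters on a carrier type 'a.  Provability in TQ is rendered
  semantically (Goedel completeness): truth in every model of TQ.\<close>

fun npow :: "('a \<Rightarrow> 'a \<Rightarrow> 'a) \<Rightarrow> 'a \<Rightarrow> 'a \<Rightarrow> nat \<Rightarrow> 'a" where
  "npow mult one y 0 = one"
| "npow mult one y (Suc 0) = y"
| "npow mult one y (Suc (Suc k)) = mult y (npow mult one y (Suc k))"

definition Re :: "('a \<Rightarrow> 'a \<Rightarrow> 'a) \<Rightarrow> 'a \<Rightarrow> nat \<Rightarrow> 'a \<Rightarrow> bool" where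
  "Re mult one n y \<longleftrightarrow> (\<exists>x. y = npow mult one x n)"

definition TQ :: "('a \<Rightarrow> 'a \<Rightarrow> bool) \<Rightarrow> ('a \<Rightarrow> 'a \<Rightarrow> 'a) \<Rightarrow> ('a \<Rightarrow> 'a) \<Rightarrow> 'a \<Rightarrow> bool" where
  "TQ lt mult iv one \<longleftrightarrow>
     (\<forall>x y. lt x y \<longrightarrow> \<not> lt y x) \<and>
     (\<forall>x y z. lt x y \<and> lt y z \<longrightarrow> lt x z) \<and>
     (\<forall>x y. lt x y \<or> x = y \<or> lt y x) \<and>
     (\<forall>x y z. mult x (mult y z) = mult (mult x y) z) \<and>
     (\<forall>x. mult x one = x) \<and>
     (\<forall>x. mult x (iv x) = one) \<and>
     (\<forall>x y. mult x y = mult y x) \<and>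
     (\<forall>x y z. lt x y \<longrightarrow> lt (mult x z) (mult y z)) \<and>
     (\<exists>y. y \<noteq> one) \<and>
     (\<forall>n::nat. n \<ge> 1 \<longrightarrow>
        (\<forall>x z. \<exists>y. lt x z \<longrightarrow> lt x (npow mult one y n) \<and> lt (npow mult one y n) z)) \<and>
     (\<forall>(n::nat) (q::nat) (m::nat \<Rightarrow> nat). n \<ge> 1 \<and> q \<ge> 1 \<and> (\<forall>j<q. m j > 1) \<longrightarrow>
        (\<forall>xs::nat \<Rightarrow> 'a. \<exists>y. \<forall>z. \<forall>j<q. \<not> (m j dvd n) \<longrightarrow>
            mult (npow mult one y n) (xs j) \<noteq> npow mult one z (m j)))"

end

theory Submission
  imports Defs
begin

text \<open>Translation by \<open>u\<close> is an order automorphism. So, to get \<open>x < y < z\<close> with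
  \<open>y u\<close> an \<open>n\<close>-th power, pick an \<open>n\<close>-th power \<open>w\<^sup>n\<close> strictly between \<open>x u\<close> and
  \<open>z u\<close> (density of \<open>n\<close>-th powers) and put \<open>y = w\<^sup>n u\<^sup>-\<^sup>1\<close>. The one-sided
  versions follow because a nontrivial linearly ordered group has neither a largest nor a
  smallest element.\<close>

definition dense_powers :: "('a \<Rightarrow> 'a \<Rightarrow> bool) \<Rightarrow> ('a \<Rightarrow> 'a \<Rightarrow> 'a) \<Rightarrow> 'a \<Rightarrow> nat \<Rightarrow> bool" where
  "dense_powers lt mult one n \<longleftrightarrow>
     (\<forall>x z. lt x z \<longrightarrow> (\<exists>y. lt x (npow mult one y n) \<and> lt (npow mult one y n) z))"

locale invariant_total_comm_group =
  fixes lt :: "'a \<Rightarrow> 'a \<Rightarrow> bool" and mult :: "'a \<Rightarrow> 'a \<Rightarrow> 'a"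
    and iv :: "'a \<Rightarrow> 'a" and one :: 'a
  assumes lt_total: "lt x y \<or> x = y \<or> lt y x"
    and mult_assoc: "mult x (mult y z) = mult (mult x y) z"
    and mult_one_right: "mult x one = x"
    and mult_inv_right: "mult x (iv x) = one"
    and mult_comm: "mult x y = mult y x"
    and lt_mult_right: "lt x y \<Longrightarrow> lt (mult x z) (mult y z)"
begin

lemma mult_inv_mult_cancel: "mult (mult w (iv u)) u = w"
  by (metis mult_assoc mult_comm mult_inv_right mult_one_right)

lemma mult_mult_inv_cancel: "mult (mult w u) (iv u) = w"
  by (metis mult_assoc mult_inv_right mult_one_right)

lemma lt_mult_right_cancel:
  assumes "lt (mult x u) (mult z u)"
  shows "lt x z"
  using lt_mult_right[OF assms, of "iv u"] by (simp add: mult_mult_inv_cancel)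

lemma exists_gt_one:
  assumes "a \<noteq> one"
  shows "\<exists>b. lt one b"
proof (cases "lt one a")
  case False
  with assms lt_total have "lt a one" by blast
  then have "lt (mult a (iv a)) (mult one (iv a))" by (rule lt_mult_right)
  then have "lt one (iv a)" by (metis mult_comm mult_inv_right mult_one_right)
  then show ?thesis ..
qed blast

lemma lt_mult_gt_one:
  assumes "lt one b"
  shows "lt x (mult x b)"
  using lt_mult_right[OF assms, of x] by (metis mult_comm mult_one_right)

lemma lt_mult_inv_gt_one:
  assumes "lt one b"
  shows "lt (mult z (iv b)) z"
  using lt_mult_gt_one[OF assms, of "mult z (iv b)"] by (simp add: mult_inv_mult_cancel)

lemma exists_between_power_translate:
  assumes "dense_powers lt mult one n" and "lt x z"
  shows "\<exists>y. lt x y \<and> lt y z \<and> Re mult one n (mult y u)"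
proof -
  from assms obtain w where
    w: "lt (mult x u) (npow mult one w n)" "lt (npow mult one w n) (mult z u)"
    unfolding dense_powers_def using lt_mult_right by blast
  define y where "y = mult (npow mult one w n) (iv u)"
  have y_u: "mult y u = npow mult one w n"
    by (simp add: y_def mult_inv_mult_cancel)
  have "lt x y" "lt y z"
    using w by (auto simp: y_u intro: lt_mult_right_cancel[of _ u])
  moreover have "Re mult one n (mult y u)"
    unfolding y_u Re_def by blast
  ultimately show ?thesis by blast
qed

end

lemma TQ_invariant_total_comm_group:
  assumes "TQ lt mult iv one"
  shows "invariant_total_comm_group lt mult iv one"
  using assms unfolding TQ_def invariant_total_comm_group_def
  by (elim conjE) (intro conjI; assumption)

lemma TQ_nontrivial:
  assumes "TQ lt mult iv one"
  shows "\<exists>a. a \<noteq> one"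
  using assms unfolding TQ_def by (elim conjE)

lemma TQ_dense_powers:
  assumes "TQ lt mult iv one" and "n \<ge> 1"
  shows "dense_powers lt mult one n"
  using assms unfolding TQ_def dense_powers_def by (elim conjE) meson

theorem lemma3:
  fixes lt :: "'a \<Rightarrow> 'a \<Rightarrow> bool" and mult :: "'a \<Rightarrow> 'a \<Rightarrow> 'a"
    and iv :: "'a \<Rightarrow> 'a" and one :: 'a and n :: nat
  assumes "TQ lt mult iv one" and "n > 1"
  shows "(\<forall>u. \<exists>y. Re mult one n (mult y u)) \<and>
         (\<forall>x u. \<exists>y. lt x y \<and> Re mult one n (mult y u)) \<and>
         (\<forall>z u. \<exists>y. lt y z \<and> Re mult one n (mult y u)) \<and>
         (\<forall>x z u. \<exists>y. lt x z \<longrightarrow> (lt x y \<and> lt y z \<and> Re mult one n (mult y u)))"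
proof -
  interpret invariant_total_comm_group lt mult iv one
    using assms(1) by (rule TQ_invariant_total_comm_group)
  have dense: "dense_powers lt mult one n"
    using assms by (simp add: TQ_dense_powers)
  note between = exists_between_power_translate[OF dense]
  obtain b where "lt one b"
    using TQ_nontrivial[OF assms(1)] exists_gt_one by blast
  then have above: "\<exists>y. lt x y \<and> Re mult one n (mult y u)" for x u
    using between[OF lt_mult_gt_one] by blast
  have below: "\<exists>y. lt y z \<and> Re mult one n (mult y u)" for z u
    using between[OF lt_mult_inv_gt_one[OF \<open>lt one b\<close>]] by blast
  show ?thesis
    using above below between by blast
qed

end
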